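(* Let $\omega=e^{2\pi i/3}$ and $p\in[0,1]$. Let $X_1$ be uniformly distributed on $\{\pm 1,\pm\omega,\pm\omega^2\}\subset\mathbb{C}$. For each $n\ge 1$, choose $T_n$ uniformly from $\{1,\dots,n\}$ and set $X_{n+1}=X_{T_n}$ with probability $p/2$, $X_{n+1}=-X_{T_n}$ with probability $p/2$, and $X_{n+1}=\xi_{n+1}$ with probability $1-p$, where $(\xi_n)_{n\ge 1}$ are i.i.d. uniform on $\{\pm 1,\pm\omega,\pm\omega^2\}$, and all the random choices (the $T_n$, the choice among the three alternatives, and the $\xi_n$) are made independently of each other and of the past. Let $S_0=0$ and $S_n=\sum_{i=1}^n X_i$. Then $S_n/n\to 0$ almost surely as $n\to\infty$.
   Context: $\mathbb{C}$ is identified with $\mathbb{R}^2$, so $(S_n)$ is a walk on the triangular lattice in $\mathbb{R}^2$ (the "elephant random walk" on the triangular lattice). *)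

theory Defs
  imports "HOL-Probability.Probability"
begin

definition omega3 :: complex where "omega3 = cis (2 * pi / 3)"

definition dirs :: "complex set" where
  "dirs = {1, -1, omega3, - omega3, omega3 ^ 2, - (omega3 ^ 2)}"

text \<open>Choice among the three alternatives: 0 = copy X_{T_n} (prob p/2),
  1 = copy -X_{T_n} (prob p/2), 2 = fresh xi (prob 1-p).\<close>
definition copy_choice :: "real \<Rightarrow> nat pmf" where
  "copy_choice p = do { b \<leftarrow> bernoulli_pmf p; s \<leftarrow> bernoulli_pmf (1/2);
      return_pmf (if b then (if s then 0 else 1) else 2) }"

text \<open>Randomness of coordinate n: coordinate 0 carries X_1 (third component);
  coordinate n >= 1 carries (T_n, choice_n, xi_{n+1}), all independent.\<close>
definition step_pmf :: "real \<Rightarrow> nat \<Rightarrow> (nat \<times> nat \<times> complex) pmf" where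
  "step_pmf p n = (if n = 0 then map_pmf (\<lambda>z. (0, 0, z)) (pmf_of_set dirs)
     else pair_pmf (pmf_of_set {1..n}) (pair_pmf (copy_choice p) (pmf_of_set dirs)))"

definition elephant_space :: "real \<Rightarrow> (nat \<Rightarrow> nat \<times> nat \<times> complex) measure" where
  "elephant_space p = PiM UNIV (\<lambda>n. measure_pmf (step_pmf p n))"

fun elephant_steps :: "(nat \<Rightarrow> nat \<times> nat \<times> complex) \<Rightarrow> nat \<Rightarrow> complex list" where
  "elephant_steps w 0 = []"
| "elephant_steps w (Suc 0) = [snd (snd (w 0))]"
| "elephant_steps w (Suc (Suc n)) =
     (let xs = elephant_steps w (Suc n); t = fst (w (Suc n));
          c = fst (snd (w (Suc n))); z = snd (snd (w (Suc n)))
      in xs @ [if c = 0 then xs ! (t - 1) else if c = 1 then - (xs ! (t - 1)) else z])"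

definition elephant_S :: "(nat \<Rightarrow> nat \<times> nat \<times> complex) \<Rightarrow> nat \<Rightarrow> complex" where
  "elephant_S w n = sum_list (elephant_steps w n)"

end

(*
  Flipping the sign of the randomness that produces X_(n+1) -- exchanging "copy" with
  "copy negated" and negating the fresh direction -- preserves the product measure, negates
  X_(n+1) and leaves X_1, ..., X_n unchanged.  Hence distinct steps are orthogonal in L^2 and
  E |S_n|^2 <= n.  Rajchman's argument then gives the strong law: the second moments of
  S_(k^2) / k^2 are summable, so S_(k^2) / k^2 -> 0 almost surely, and since the steps are
  bounded, |S_n| / n <= |S_(m^2)| / m^2 + 2 / m for m = floor (sqrt n).
*)
theory Submission
  imports Defs "HOL-Library.Discrete_Functions"
begin

lemma norm_sum_lessThan_diff_le:
  fixes X :: "nat \<Rightarrow> 'a::real_normed_vector"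
  assumes "\<And>k. norm (X k) \<le> B" and "m \<le> n"
  shows "norm ((\<Sum>i<n. X i) - (\<Sum>i<m. X i)) \<le> real (n - m) * B"
proof -
  have "(\<Sum>i<n. X i) - (\<Sum>i<m. X i) = (\<Sum>i\<in>{m..<n}. X i)"
    using sum_diff_nat_ivl[of 0 m n X] assms(2) by (simp add: atLeast0LessThan)
  also have "norm \<dots> \<le> (\<Sum>i\<in>{m..<n}. norm (X i))"
    by (rule norm_sum)
  also have "\<dots> \<le> real (n - m) * B"
    using sum_bounded_above[of "{m..<n}" "\<lambda>i. norm (X i)" B] assms(1) by simp
  finally show ?thesis .
qed

lemma filterlim_floor_sqrt_at_top: "filterlim floor_sqrt at_top sequentially"
  unfolding filterlim_at_top
  by (metis eventually_sequentiallyI le_floor_sqrtI)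

lemma averages_tendsto_zero_if_tendsto_zero_along_squares:
  fixes X :: "nat \<Rightarrow> 'a::real_normed_vector"
  assumes bound: "\<And>k. norm (X k) \<le> B"
    and squares: "(\<lambda>k. (\<Sum>i<k^2. X i) /\<^sub>R real (k^2)) \<longlonglongrightarrow> 0"
  shows "(\<lambda>n. (\<Sum>i<n. X i) /\<^sub>R real n) \<longlonglongrightarrow> 0"
proof -
  have "0 \<le> B"
    using order_trans[OF norm_ge_zero bound] .
  define b where "b k = norm ((\<Sum>i<k^2. X i) /\<^sub>R real (k^2)) + 2 * B / real k" for k
  have "b \<longlonglongrightarrow> 0"
    unfolding b_def using tendsto_add[OF tendsto_norm_zero[OF squares] lim_const_over_n[of "2 * B"]]
    by simp
  then have b_floor_sqrt: "(\<lambda>n. b (floor_sqrt n)) \<longlonglongrightarrow> 0"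
    using filterlim_compose filterlim_floor_sqrt_at_top by blast
  have "norm ((\<Sum>i<n. X i) /\<^sub>R real n) \<le> b (floor_sqrt n)" if "1 \<le> n" for n
  proof -
    define m where "m = floor_sqrt n"
    have "m^2 \<le> n" "n < (Suc m)^2" "0 < m"
      using that Suc_floor_sqrt_power2_gt[of n] by (simp_all add: m_def)
    then have n_minus: "n - m^2 \<le> 2 * m" by (simp add: power2_eq_square)
    have "norm (\<Sum>i<n. X i) \<le> norm (\<Sum>i<m^2. X i) + real (n - m^2) * B"
      using norm_sum_lessThan_diff_le[of X B, OF bound \<open>m^2 \<le> n\<close>]
        norm_triangle_ineq2[of "\<Sum>i<n. X i" "\<Sum>i<m^2. X i"] by linarith
    also have "\<dots> \<le> norm (\<Sum>i<m^2. X i) + 2 * real m * B"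
      using n_minus \<open>0 \<le> B\<close> by (intro add_left_mono mult_right_mono) auto
    finally have "norm ((\<Sum>i<n. X i) /\<^sub>R real n) \<le> (norm (\<Sum>i<m^2. X i) + 2 * real m * B) / real n"
      using that by (simp add: divide_right_mono flip: divide_inverse_commute)
    also have "\<dots> \<le> (norm (\<Sum>i<m^2. X i) + 2 * real m * B) / real (m^2)"
      using that \<open>m^2 \<le> n\<close> \<open>0 < m\<close> \<open>0 \<le> B\<close> by (intro divide_left_mono) auto
    also have "\<dots> = b m"
      using \<open>0 < m\<close> by (simp add: b_def field_simps power2_eq_square)
    finally show ?thesis by (simp add: m_def)
  qed
  then have "eventually (\<lambda>n. norm ((\<Sum>i<n. X i) /\<^sub>R real n) \<le> b (floor_sqrt n)) sequentially"
    by (rule eventually_sequentiallyI)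
  then show ?thesis
    using b_floor_sqrt by (rule Lim_null_comparison)
qed

lemma AE_tendsto_zero_if_summable_integrals:
  fixes Z :: "nat \<Rightarrow> 'a \<Rightarrow> real"
  assumes integrable: "\<And>k. integrable M (Z k)" and nonneg: "\<And>k x. 0 \<le> Z k x"
    and summable: "summable (\<lambda>k. integral\<^sup>L M (Z k))"
  shows "AE x in M. (\<lambda>k. Z k x) \<longlonglongrightarrow> 0"
proof -
  have [measurable]: "Z k \<in> borel_measurable M" for k
    using integrable by (rule borel_measurable_integrable)
  have "(\<integral>\<^sup>+x. (\<Sum>k. ennreal (Z k x)) \<partial>M) = (\<Sum>k. \<integral>\<^sup>+x. ennreal (Z k x) \<partial>M)"
    by (rule nn_integral_suminf) measurable
  also have "\<dots> = (\<Sum>k. ennreal (integral\<^sup>L M (Z k)))"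
    using integrable nonneg by (intro suminf_cong nn_integral_eq_integral) auto
  also have "\<dots> = ennreal (\<Sum>k. integral\<^sup>L M (Z k))"
    using summable integrable nonneg by (intro suminf_ennreal2 integral_nonneg_AE) auto
  finally have "(\<integral>\<^sup>+x. (\<Sum>k. ennreal (Z k x)) \<partial>M) \<noteq> \<infinity>"
    by simp
  then have "AE x in M. (\<Sum>k. ennreal (Z k x)) \<noteq> \<infinity>"
    by (intro nn_integral_PInf_AE) measurable
  then show ?thesis
  proof (rule AE_mp, intro AE_I2 impI)
    fix x assume "(\<Sum>k. ennreal (Z k x)) \<noteq> \<infinity>"
    then have "summable (\<lambda>k. Z k x)"
      using nonneg by (intro summable_suminf_not_top) auto
    then show "(\<lambda>k. Z k x) \<longlonglongrightarrow> 0"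
      by (rule summable_LIMSEQ_zero)
  qed
qed

lemma (in prob_space) expectation_norm_sum_squared_le:
  fixes X :: "nat \<Rightarrow> 'a \<Rightarrow> 'b::{real_inner, second_countable_topology}"
  assumes [measurable]: "\<And>i. X i \<in> borel_measurable M"
    and bound: "\<And>i x. norm (X i x) \<le> B"
    and orthogonal: "\<And>i j. i \<noteq> j \<Longrightarrow> expectation (\<lambda>x. inner (X i x) (X j x)) = 0"
  shows "expectation (\<lambda>x. (norm (\<Sum>i<n. X i x))^2) \<le> real n * B^2"
proof -
  have B_nonneg: "0 \<le> B"
    using order_trans[OF norm_ge_zero bound] .
  have inner_integrable: "integrable M (\<lambda>x. inner (X i x) (X j x))" for i j
  proof (rule integrable_const_bound[where B="B * B"])
    have "\<bar>inner (X i x) (X j x)\<bar> \<le> B * B" for x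
    proof -
      have "\<bar>inner (X i x) (X j x)\<bar> \<le> norm (X i x) * norm (X j x)"
        by (rule Cauchy_Schwarz_ineq2)
      also have "\<dots> \<le> B * B"
        using bound B_nonneg by (intro mult_mono) simp_all
      finally show ?thesis .
    qed
    then show "AE x in M. norm (inner (X i x) (X j x)) \<le> B * B"
      by simp
  qed simp
  have "(norm (\<Sum>i<n. X i x))^2 = (\<Sum>i<n. \<Sum>j<n. inner (X i x) (X j x))" for x
    by (simp add: power2_norm_eq_inner inner_sum_left inner_sum_right) (rule sum.swap)
  then have "expectation (\<lambda>x. (norm (\<Sum>i<n. X i x))^2)
      = expectation (\<lambda>x. \<Sum>i<n. \<Sum>j<n. inner (X i x) (X j x))"
    by simp
  also have "\<dots> = (\<Sum>i<n. \<Sum>j<n. expectation (\<lambda>x. inner (X i x) (X j x)))"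
    using inner_integrable by (simp add: integral_sum integrable_sum)
  also have "\<dots> = (\<Sum>i<n. expectation (\<lambda>x. inner (X i x) (X i x)))"
  proof (rule sum.cong[OF refl])
    fix i
    have "(\<Sum>j<n. expectation (\<lambda>x. inner (X i x) (X j x)))
        = (\<Sum>j<n. if j = i then expectation (\<lambda>x. inner (X i x) (X i x)) else 0)"
      using orthogonal by (intro sum.cong) auto
    also assume "i \<in> {..<n}"
    then have "(\<Sum>j<n. if j = i then expectation (\<lambda>x. inner (X i x) (X i x)) else 0)
        = expectation (\<lambda>x. inner (X i x) (X i x))"
      by simp
    finally show "(\<Sum>j<n. expectation (\<lambda>x. inner (X i x) (X j x)))
        = expectation (\<lambda>x. inner (X i x) (X i x))" .
  qed
  also have "\<dots> \<le> (\<Sum>i<n. B^2)"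
  proof (rule sum_mono)
    fix i
    have "inner (X i x) (X i x) \<le> B^2" for x
      using power_mono[OF bound[of i x] norm_ge_zero, of 2] by (simp add: power2_norm_eq_inner)
    then have "expectation (\<lambda>x. inner (X i x) (X i x)) \<le> expectation (\<lambda>x. B^2)"
      using inner_integrable by (intro integral_mono) auto
    then show "expectation (\<lambda>x. inner (X i x) (X i x)) \<le> B^2"
      by (simp add: prob_space)
  qed
  finally show ?thesis by simp
qed

lemma (in prob_space) AE_averages_tendsto_zero_if_orthogonal:
  fixes X :: "nat \<Rightarrow> 'a \<Rightarrow> 'b::{real_inner, second_countable_topology}"
  assumes [measurable]: "\<And>i. X i \<in> borel_measurable M"
    and bound: "\<And>i x. norm (X i x) \<le> B"
    and orthogonal: "\<And>i j. i \<noteq> j \<Longrightarrow> expectation (\<lambda>x. inner (X i x) (X j x)) = 0"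
  shows "AE x in M. (\<lambda>n. (\<Sum>i<n. X i x) /\<^sub>R real n) \<longlonglongrightarrow> 0"
proof -
  define Z where "Z k x = (norm ((\<Sum>i<k^2. X i x) /\<^sub>R real (k^2)))^2" for k x
  have Z_eq: "Z k x = (norm (\<Sum>i<k^2. X i x))^2 / real k ^ 4" for k x
    by (simp add: Z_def power_mult_distrib field_simps flip: power_mult)
  have Z_nonneg: "0 \<le> Z k x" for k x
    by (simp add: Z_def)
  have S_le: "norm (\<Sum>i<n. X i x) \<le> real n * B" for n x
    using norm_sum_lessThan_diff_le[of "\<lambda>i. X i x" B 0 n] bound by simp
  have Z_le: "Z k x \<le> (real (k^2) * B)^2 / real k ^ 4" for k x
    unfolding Z_eq using S_le[of x "k^2"] by (intro divide_right_mono power_mono) auto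
  have Z_measurable: "Z k \<in> borel_measurable M" for k
    unfolding Z_def by measurable
  have Z_integrable: "integrable M (Z k)" for k
    using Z_measurable Z_le Z_nonneg by (intro integrable_const_bound) auto
  have "integral\<^sup>L M (Z k) \<le> B^2 * inverse (real k ^ 2)" for k
  proof -
    have "integral\<^sup>L M (Z k) = expectation (\<lambda>x. (norm (\<Sum>i<k^2. X i x))^2) / real k ^ 4"
      by (simp add: Z_eq[abs_def])
    also have "\<dots> \<le> real (k^2) * B^2 / real k ^ 4"
      using expectation_norm_sum_squared_le[of X B "k^2", OF _ bound orthogonal] by (intro divide_right_mono) auto
    also have "\<dots> = B^2 * inverse (real k ^ 2)"
      by (cases "k = 0") (simp_all add: field_simps)
    finally show ?thesis .
  qed
  then have "summable (\<lambda>k. integral\<^sup>L M (Z k))"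
    by (intro summable_comparison_test'[OF summable_mult[OF inverse_power_summable]])
       (auto simp: Z_def)
  then have "AE x in M. (\<lambda>k. Z k x) \<longlonglongrightarrow> 0"
    by (rule AE_tendsto_zero_if_summable_integrals[OF Z_integrable Z_nonneg])
  then show ?thesis
  proof (rule eventually_mono)
    fix x assume "(\<lambda>k. Z k x) \<longlonglongrightarrow> 0"
    then have "(\<lambda>k. sqrt (Z k x)) \<longlonglongrightarrow> 0"
      using tendsto_real_sqrt by fastforce
    then have "(\<lambda>k. norm ((\<Sum>i<k^2. X i x) /\<^sub>R real (k^2))) \<longlonglongrightarrow> 0"
      by (simp add: Z_def)
    then have "(\<lambda>k. (\<Sum>i<k^2. X i x) /\<^sub>R real (k^2)) \<longlonglongrightarrow> 0"
      by (rule tendsto_norm_zero_cancel)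
    then show "(\<lambda>n. (\<Sum>i<n. X i x) /\<^sub>R real n) \<longlonglongrightarrow> 0"
      using bound by (rule averages_tendsto_zero_if_tendsto_zero_along_squares[rotated])
  qed
qed

lemma measurable_PiM_fun_upd_component:
  "f \<in> measurable (M n) (M n) \<Longrightarrow> (\<lambda>w. w(n := f (w n))) \<in> measurable (PiM UNIV M) (PiM UNIV M)"
  by (rule measurable_fun_upd[where J=UNIV]) auto

lemma distr_PiM_fun_upd_component:
  fixes M :: "'i \<Rightarrow> 'a measure"
  assumes M: "\<And>i. prob_space (M i)"
    and f [measurable]: "f \<in> measurable (M n) (M n)"
    and preserving: "distr (M n) (M n) f = M n"
  shows "distr (PiM UNIV M) (PiM UNIV M) (\<lambda>w. w(n := f (w n))) = PiM UNIV M"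
proof -
  note upd_measurable [measurable] = measurable_PiM_fun_upd_component[of f M n, OF f]
  show ?thesis
  proof (rule measure_eqI_PiM_infinite[where I=UNIV and M=M])
    show "finite_measure (distr (PiM UNIV M) (PiM UNIV M) (\<lambda>w. w(n := f (w n))))"
      using M by (intro prob_space.finite_measure prob_space.prob_space_distr prob_space_PiM upd_measurable)
  next
    fix J :: "'i set" and A assume J: "finite J" and A: "\<And>i. i \<in> J \<Longrightarrow> A i \<in> sets (M i)"
    define A' where "A' i = (if i = n then f -` A n \<inter> space (M n) else A i)" for i
    have A': "A' i \<in> sets (M i)" if "i \<in> J" for i
      using A that by (auto simp: A'_def)
    have "(\<lambda>w. w(n := f (w n))) -` prod_emb UNIV M J (Pi\<^sub>E J A) \<inter> space (PiM UNIV M)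
        = prod_emb UNIV M J (Pi\<^sub>E J A')"
      using measurable_space[OF f] by (fastforce simp: prod_emb_iff space_PiM A'_def PiE_iff Ball_def)
    then have "distr (PiM UNIV M) (PiM UNIV M) (\<lambda>w. w(n := f (w n))) (prod_emb UNIV M J (Pi\<^sub>E J A))
        = emeasure (PiM UNIV M) (prod_emb UNIV M J (Pi\<^sub>E J A'))"
      using J A by (simp add: emeasure_distr sets_PiM_I)
    also have "\<dots> = (\<Prod>i\<in>J. emeasure (M i) (A' i))"
      using M J A' by (intro emeasure_PiM_emb) auto
    also have "\<dots> = (\<Prod>i\<in>J. emeasure (M i) (A i))"
    proof (rule prod.cong[OF refl])
      fix i assume "i \<in> J"
      then show "emeasure (M i) (A' i) = emeasure (M i) (A i)"
        using A[OF \<open>i \<in> J\<close>] emeasure_distr[OF f, of "A n"] by (auto simp: A'_def preserving)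
    qed
    also have "\<dots> = emeasure (PiM UNIV M) (prod_emb UNIV M J (Pi\<^sub>E J A))"
      using M J A by (intro emeasure_PiM_emb[symmetric]) auto
    finally show "emeasure (distr (PiM UNIV M) (PiM UNIV M) (\<lambda>w. w(n := f (w n)))) (prod_emb UNIV M J (Pi\<^sub>E J A))
        = emeasure (PiM UNIV M) (prod_emb UNIV M J (Pi\<^sub>E J A))" .
  qed simp_all
qed

lemma finite_dirs: "finite dirs" and dirs_nonempty: "dirs \<noteq> {}"
  by (auto simp: dirs_def)

lemma uminus_dirs: "uminus ` dirs = dirs"
  by (auto simp: dirs_def image_insert)

lemma uminus_in_dirs_iff [simp]: "- z \<in> dirs \<longleftrightarrow> z \<in> dirs"
  using uminus_dirs by force

lemma norm_dirs: "z \<in> dirs \<Longrightarrow> norm z = 1"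
  by (auto simp: dirs_def norm_power omega3_def)

lemma bernoulli_pmf_half_map_Not: "map_pmf Not (bernoulli_pmf (1/2)) = bernoulli_pmf (1/2)"
  by (simp add: bernoulli_pmf_half_conv_pmf_of_set map_pmf_of_set_inj inj_def UNIV_bool insert_commute)

definition flip_choice :: "nat \<Rightarrow> nat" where
  "flip_choice c = (if c = 0 then 1 else if c = 1 then 0 else c)"

lemma map_pmf_flip_choice_copy_choice: "map_pmf flip_choice (copy_choice p) = copy_choice p"
proof -
  have "map_pmf flip_choice (copy_choice p) = do { b \<leftarrow> bernoulli_pmf p; s \<leftarrow> bernoulli_pmf (1/2);
      return_pmf (if b then (if \<not> s then 0 else 1) else 2) }"
    unfolding copy_choice_def map_bind_pmf map_return_pmf
    by (intro bind_pmf_cong refl) (auto simp: flip_choice_def)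
  also have "\<dots> = do { b \<leftarrow> bernoulli_pmf p; s \<leftarrow> map_pmf Not (bernoulli_pmf (1/2));
      return_pmf (if b then (if s then 0 else 1) else 2) }"
    by (simp add: bind_map_pmf)
  also have "\<dots> = copy_choice p"
    by (simp add: bernoulli_pmf_half_map_Not copy_choice_def)
  finally show ?thesis .
qed

lemma map_pmf_uminus_dirs: "map_pmf uminus (pmf_of_set dirs) = pmf_of_set dirs"
  by (subst map_pmf_of_set_inj) (auto simp: uminus_dirs finite_dirs dirs_nonempty)

definition flip_step :: "nat \<times> nat \<times> complex \<Rightarrow> nat \<times> nat \<times> complex" where
  "flip_step = (\<lambda>(t, c, z). (t, flip_choice c, - z))"

lemma map_pmf_flip_step:
  assumes "n \<noteq> 0"
  shows "map_pmf flip_step (step_pmf p n) = step_pmf p n"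
proof -
  have "step_pmf p n = pair_pmf (pmf_of_set {1..n})
      (pair_pmf (map_pmf flip_choice (copy_choice p)) (map_pmf uminus (pmf_of_set dirs)))"
    using assms by (simp add: step_pmf_def map_pmf_flip_choice_copy_choice map_pmf_uminus_dirs)
  also have "\<dots> = map_pmf flip_step (pair_pmf (pmf_of_set {1..n}) (pair_pmf (copy_choice p) (pmf_of_set dirs)))"
    unfolding pair_map_pmf1 pair_map_pmf2 map_pmf_comp
    by (intro map_pmf_cong refl) (auto simp: flip_step_def)
  finally show ?thesis
    using assms by (simp add: step_pmf_def)
qed

type_synonym outcome = "nat \<Rightarrow> nat \<times> nat \<times> complex"

definition clip_to_dirs :: "complex \<Rightarrow> complex" where
  "clip_to_dirs z = (if z \<in> dirs then z else 0)"

lemma clip_to_dirs_uminus: "clip_to_dirs (- z) = - clip_to_dirs z"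
  by (simp add: clip_to_dirs_def)

(* elephant_X w k is X_(k+1).  Off the support of elephant_space, a null set, the recursion
   uses junk values (0 for a T_n outside {1..n} or a fresh value outside dirs); this makes it
   terminate and keeps |elephant_X w k| <= 1 everywhere. *)
function elephant_X :: "outcome \<Rightarrow> nat \<Rightarrow> complex" where
  "elephant_X w 0 = clip_to_dirs (snd (snd (w 0)))"
| "elephant_X w (Suc n) =
    (let t = fst (w (Suc n)); c = fst (snd (w (Suc n)));
         copy = (if 1 \<le> t \<and> t \<le> Suc n then elephant_X w (t - 1) else 0)
     in if c = 0 then copy else if c = 1 then - copy else clip_to_dirs (snd (snd (w (Suc n)))))"
  by pat_completeness auto
termination by (relation "Wellfounded.measure snd") auto

lemma norm_elephant_X_le: "norm (elephant_X w k) \<le> 1"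
  by (induction w k rule: elephant_X.induct) (auto simp: Let_def clip_to_dirs_def norm_dirs)

lemma elephant_X_cong: "(\<And>j. j \<le> k \<Longrightarrow> w j = w' j) \<Longrightarrow> elephant_X w k = elephant_X w' k"
proof (induction k rule: less_induct)
  case (less k)
  show ?case
  proof (cases k)
    case (Suc n)
    have "elephant_X w (t - 1) = elephant_X w' (t - 1)" if "1 \<le> t" "t \<le> Suc n" for t
      using that Suc less by (intro less.IH) auto
    then show ?thesis
      using less.prems[of k] by (simp add: Suc Let_def)
  qed (use less.prems in simp)
qed

lemma space_elephant_space [simp]: "space (elephant_space p) = UNIV"
  by (simp add: elephant_space_def space_PiM)

lemma prob_space_elephant_space: "prob_space (elephant_space p)"
  unfolding elephant_space_def by (intro prob_space_PiM prob_space_measure_pmf)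

lemma measurable_elephant_space_component:
  "(\<lambda>w. f (w i)) \<in> measurable (elephant_space p) N" if "f \<in> UNIV \<rightarrow> space N"
proof (rule measurable_compose[of _ _ "measure_pmf (step_pmf p i)"])
  show "(\<lambda>w. w i) \<in> measurable (elephant_space p) (measure_pmf (step_pmf p i))"
    unfolding elephant_space_def by (rule measurable_component_singleton) simp
qed (simp add: that)

lemma measurable_elephant_X [measurable]: "(\<lambda>w. elephant_X w k) \<in> borel_measurable (elephant_space p)"
proof (induction k rule: less_induct)
  case (less k)
  show ?case
  proof (cases k)
    case 0
    then show ?thesis
      by (auto intro: measurable_elephant_space_component)
  next
    case (Suc n)
    define copy where "copy t w = (if 1 \<le> t \<and> t \<le> Suc n then elephant_X w (t - 1) else 0)" for t w
    have copy: "(\<lambda>w. copy (fst (w (Suc n))) w) \<in> borel_measurable (elephant_space p)"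
    proof (rule measurable_compose_countable'[where I=UNIV and f=copy and g="\<lambda>w. fst (w (Suc n))"])
      show "(\<lambda>w. copy t w) \<in> borel_measurable (elephant_space p)" for t
        using less Suc by (cases "1 \<le> t \<and> t \<le> Suc n") (auto simp: copy_def)
    qed (auto intro: measurable_elephant_space_component)
    have choice: "(\<lambda>w. fst (snd (w (Suc n)))) \<in> measurable (elephant_space p) (count_space UNIV)"
      and fresh: "(\<lambda>w. clip_to_dirs (snd (snd (w (Suc n))))) \<in> borel_measurable (elephant_space p)"
      by (auto intro: measurable_elephant_space_component)
    have unfold: "(\<lambda>w. elephant_X w k) = (\<lambda>w. if fst (snd (w (Suc n))) = 0 then copy (fst (w (Suc n))) w
       else if fst (snd (w (Suc n))) = 1 then - copy (fst (w (Suc n))) w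
       else clip_to_dirs (snd (snd (w (Suc n)))))"
      unfolding copy_def by (simp add: Suc Let_def fun_eq_iff)
    show ?thesis
      unfolding unfold using copy choice fresh by measurable
  qed
qed

definition flip_at :: "nat \<Rightarrow> outcome \<Rightarrow> outcome" where
  "flip_at n w = w(n := flip_step (w n))"

lemma distr_elephant_space_flip_at:
  assumes "n \<noteq> 0"
  shows "distr (elephant_space p) (elephant_space p) (flip_at n) = elephant_space p"
proof -
  have "distr (measure_pmf (step_pmf p n)) (measure_pmf (step_pmf p n)) flip_step
      = measure_pmf (map_pmf flip_step (step_pmf p n))"
    unfolding map_pmf_rep_eq by (rule distr_cong) simp_all
  then show ?thesis
    unfolding elephant_space_def flip_at_def
    using assms by (intro distr_PiM_fun_upd_component) (simp_all add: map_pmf_flip_step prob_space_measure_pmf)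
qed

lemma measurable_flip_at [measurable]: "flip_at n \<in> measurable (elephant_space p) (elephant_space p)"
  unfolding elephant_space_def flip_at_def by (rule measurable_PiM_fun_upd_component) simp

lemma elephant_X_flip_at_less: "k < n \<Longrightarrow> elephant_X (flip_at n w) k = elephant_X w k"
  by (rule elephant_X_cong) (simp add: flip_at_def)

lemma elephant_X_flip_at_self: "n \<noteq> 0 \<Longrightarrow> elephant_X (flip_at n w) n = - elephant_X w n"
proof (cases n)
  case (Suc m)
  have "elephant_X (flip_at (Suc m) w) t = elephant_X w t" if "t \<le> m" for t
    using that by (intro elephant_X_flip_at_less) simp
  then show ?thesis
    by (auto simp: Suc Let_def flip_at_def flip_step_def flip_choice_def clip_to_dirs_uminus split: prod.splits)
qed simp

lemma expectation_inner_elephant_X_eq_0: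
  assumes "i \<noteq> j"
  shows "integral\<^sup>L (elephant_space p) (\<lambda>w. inner (elephant_X w i) (elephant_X w j)) = 0"
proof -
  interpret prob_space "elephant_space p"
    by (rule prob_space_elephant_space)
  have less: "expectation (\<lambda>w. inner (elephant_X w i) (elephant_X w n)) = 0" if "i < n" for i n
  proof -
    let ?f = "\<lambda>w. inner (elephant_X w i) (elephant_X w n)"
    have "expectation ?f = integral\<^sup>L (distr (elephant_space p) (elephant_space p) (flip_at n)) ?f"
      using that by (simp add: distr_elephant_space_flip_at)
    also have "\<dots> = expectation (\<lambda>w. ?f (flip_at n w))"
      by (rule integral_distr) simp_all
    also have "\<dots> = expectation (\<lambda>w. - ?f w)"
      using that by (simp add: elephant_X_flip_at_less elephant_X_flip_at_self)
    finally show ?thesis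
      by simp
  qed
  show ?thesis
    using assms less[of i j] less[of j i] by (cases "i < j") (simp_all add: inner_commute)
qed

lemma AE_elephant_space_support:
  "AE w in elephant_space p. \<forall>i. snd (snd (w i)) \<in> dirs \<and> (i \<noteq> 0 \<longrightarrow> fst (w i) \<in> {1..i})"
  unfolding AE_all_countable
proof
  fix i :: nat
  have "AE y in measure_pmf (step_pmf p i). snd (snd y) \<in> dirs \<and> (i \<noteq> 0 \<longrightarrow> fst y \<in> {1..i})"
    by (auto simp: AE_measure_pmf_iff step_pmf_def finite_dirs dirs_nonempty)
  then show "AE w in elephant_space p. snd (snd (w i)) \<in> dirs \<and> (i \<noteq> 0 \<longrightarrow> fst (w i) \<in> {1..i})"
    unfolding elephant_space_def by (intro AE_PiM_component) (simp_all add: prob_space_measure_pmf)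
qed

lemma elephant_steps_eq_map_elephant_X:
  "\<forall>i. snd (snd (w i)) \<in> dirs \<and> (i \<noteq> 0 \<longrightarrow> fst (w i) \<in> {1..i}) \<Longrightarrow>
    elephant_steps w n = map (elephant_X w) [0..<n]"
proof (induction w n rule: elephant_steps.induct)
  case (3 w n)
  then have IH: "elephant_steps w (Suc n) = map (elephant_X w) [0..<Suc n]"
    and "snd (snd (w (Suc n))) \<in> dirs" "fst (w (Suc n)) \<in> {1..Suc n}"
    by blast+
  moreover have "map (elephant_X w) [0..<Suc n] ! (fst (w (Suc n)) - 1) = elephant_X w (fst (w (Suc n)) - 1)"
    using \<open>fst (w (Suc n)) \<in> {1..Suc n}\<close> by (subst nth_map_upt) auto
  ultimately show ?case
    unfolding elephant_steps.simps(3)[of w n] Let_def by (simp add: clip_to_dirs_def)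
qed (simp_all add: clip_to_dirs_def)

theorem mainTheorem1:
  fixes p :: real
  assumes "0 \<le> p" and "p \<le> 1"
  shows "AE w in elephant_space p. (\<lambda>n. elephant_S w n / of_nat n) \<longlonglongrightarrow> 0"
proof -
  interpret prob_space "elephant_space p"
    by (rule prob_space_elephant_space)
  have "AE w in elephant_space p. (\<lambda>n. (\<Sum>i<n. elephant_X w i) /\<^sub>R real n) \<longlonglongrightarrow> 0"
    using norm_elephant_X_le expectation_inner_elephant_X_eq_0
    by (intro AE_averages_tendsto_zero_if_orthogonal) auto
  then show ?thesis
    using AE_elephant_space_support[of p]
  proof eventually_elim
    case (elim w)
    then show ?case
      by (simp add: elephant_S_def elephant_steps_eq_map_elephant_X scaleR_conv_of_real
          divide_inverse mult.commute atLeast0LessThan flip: sum_set_upt_conv_sum_list_nat)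
  qed
qed

end
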